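(* Let $p$ and $q=p+2$ be odd primes and $y_{pq}$ the Golomb sequence. Then its $p\times q$ finite Zak transform $X_q\{y_{pq}\}(j,k)=\sum_{r=0}^{q-1}y_{pq}(k+rp)e^{2\pi i rj/q}$ ($0\le j<q$, $0\le k<p$) is $$X_q\{y_{pq}\}(j,k)=\begin{cases}1-\alpha+\alpha q,& j=k=0,\\ \frac{(1-\alpha)(q+1)}{2}+\alpha q,& j=0,\ k\ne0,\\ 1-\alpha,& k=0,\ j\neq0,\\ \frac{1-\alpha}{2}\,A\,e^{-2\pi i\frac{p^{-1}kj}{q}},& j\ne0,\ k\ne0,\end{cases}$$ where $A=1+c_q\left(\frac{p}{q}\right)\left(\frac{k}{p}\right)\left(\frac{j}{q}\right)$, $p^{-1}$ is the inverse of $p$ modulo $q$, and $c_q=\sqrt q$ if $q\equiv1\pmod 4$, $c_q=i\sqrt q$ if $q\equiv3\pmod4$.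
   Context: Legendre/Jacobi symbols $\left(\frac{a}{M}\right)$ are zero when $\gcd(a,M)>1$. The modified Jacobi sequence $x_{pq}$ on $\mathbb{Z}/pq$ (extended periodically) is: $x_{pq}(0)=1$; $x_{pq}(n)=0$ if $p\mid n$, $q\nmid n$; $x_{pq}(n)=1$ if $q\mid n$, $p\nmid n$; for $\gcd(n,pq)=1$, $x_{pq}(n)=1$ if $\left(\frac{n}{pq}\right)=1$ and $0$ otherwise. The Golomb sequence is $y_{pq}=(1-\alpha)x_{pq}+\alpha 1_{pq}$ (value $1$ where $x_{pq}=1$ and $\alpha$ where $x_{pq}=0$), with $\alpha=e^{i\Phi}$, $\Phi=\arccos\!\left(-\frac{pq-1}{pq+1}\right)$. *)

theory Defs
  imports "HOL-Analysis.Analysis" "HOL-Number_Theory.Number_Theory"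
begin

definition jacobi_pq :: "nat \<Rightarrow> nat \<Rightarrow> int \<Rightarrow> int" where
  "jacobi_pq p q n = Legendre n (int p) * Legendre n (int q)"

definition mod_jacobi :: "nat \<Rightarrow> nat \<Rightarrow> int \<Rightarrow> complex" where
  "mod_jacobi p q n =
     (let m = n mod (int p * int q) in
      if m = 0 then 1
      else if int p dvd m \<and> \<not> int q dvd m then 0
      else if int q dvd m \<and> \<not> int p dvd m then 1
      else if jacobi_pq p q m = 1 then 1 else 0)"

definition golomb_alpha :: "nat \<Rightarrow> nat \<Rightarrow> complex" where
  "golomb_alpha p q =
     cis (arccos (- (real (p * q) - 1) / (real (p * q) + 1)))"

definition golomb :: "nat \<Rightarrow> nat \<Rightarrow> int \<Rightarrow> complex" where
  "golomb p q n = (1 - golomb_alpha p q) * mod_jacobi p q n + golomb_alpha p q"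

definition zak :: "nat \<Rightarrow> nat \<Rightarrow> (int \<Rightarrow> complex) \<Rightarrow> nat \<Rightarrow> nat \<Rightarrow> complex" where
  "zak p q y j k = (\<Sum>r<q. y (int k + int r * int p) * exp (2 * pi * \<i> * of_nat (r * j) / of_nat q))"

definition inv_mod :: "nat \<Rightarrow> nat \<Rightarrow> nat" where
  "inv_mod p q = (SOME u. u < q \<and> [p * u = 1] (mod q))"

definition c_q :: "nat \<Rightarrow> complex" where
  "c_q q = (if q mod 4 = 1 then complex_of_real (sqrt (real q))
            else \<i> * complex_of_real (sqrt (real q)))"

end

theory Submission
  imports Defs
begin

text \<open>
  Write \<open>y = (1 - \<alpha>) x + \<alpha>\<close>. The constant \<open>\<alpha>\<close> contributes \<open>\<alpha> q\<close> at frequency \<open>j = 0\<close>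
  only, and at \<open>k = 0\<close> the samples \<open>x (r p)\<close> vanish except \<open>x 0 = 1\<close>. For \<open>p\<close> not dividing \<open>k\<close>
  the samples \<open>k + r p\<close> run through all residues modulo \<open>q\<close>, and there
  \<open>x n = (1 + (n/p)(n/q))/2\<close>, plus \<open>1/2\<close> when \<open>q\<close> divides \<open>n\<close>. Substituting
  \<open>r = p^-1 (m - k)\<close> turns the transform into a twisted Legendre character sum, which is
  \<open>(p^-1 j / q) G = (p/q)(j/q) G\<close> with \<open>G = \<Sum>n. \<zeta>^(n^2)\<close> the quadratic Gauss sum,
  \<open>\<zeta> = e^(2\<pi>i/q)\<close>.

  Finally \<open>G = c_q\<close> by Gauss's evaluation. The alternating sum of the Gaussian binomials
  \<open>[q-1, k]\<close> at \<open>x = \<zeta>^-2\<close> equals \<open>\<Sum>k. \<zeta>^(k(k+1))\<close>, a shift of \<open>G\<close>, and by Gauss's identity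
  it equals \<open>\<Prod>j. (1 - x^(2j+1))\<close>, a product of sines whose sign is visible; \<open>|G|^2 = q\<close>
  supplies the modulus. The hypothesis \<open>q = p + 2\<close> is only used through \<open>p \<noteq> q\<close> and \<open>q\<close> odd.
\<close>

section \<open>Roots of unity\<close>

definition unity_root :: "nat \<Rightarrow> int \<Rightarrow> complex" where
  "unity_root q n = exp (2 * pi * \<i> * of_int n / of_nat q)"

lemma unity_root_add: "unity_root q (a + b) = unity_root q a * unity_root q b"
proof -
  have "2 * pi * \<i> * of_int (a + b) / of_nat q
      = 2 * pi * \<i> * of_int a / of_nat q + 2 * pi * \<i> * of_int b / of_nat q"
    by (simp add: distrib_left add_divide_distrib)
  then show ?thesis unfolding unity_root_def by (simp add: exp_add)
qed

lemma unity_root_0 [simp]: "unity_root q 0 = 1"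
  unfolding unity_root_def by simp

lemma unity_root_uminus_mult: "unity_root q (- a) * unity_root q a = 1"
  by (metis add.left_inverse unity_root_0 unity_root_add)

lemma unity_root_power: "unity_root q a ^ n = unity_root q (a * int n)"
  by (induction n) (auto simp: unity_root_add algebra_simps)

lemma unity_root_mult_period: "0 < q \<Longrightarrow> unity_root q (int q * t) = 1"
proof -
  assume q: "0 < q"
  have "2 * pi * \<i> * of_int (int q * t) / of_nat q = \<i> * (of_int t * (of_real pi * 2))"
    using q by (simp add: field_simps)
  then show ?thesis unfolding unity_root_def by simp
qed

lemma unity_root_mod: "0 < q \<Longrightarrow> unity_root q (a mod int q) = unity_root q a"
  by (metis div_mult_mod_eq mult.commute mult_1 unity_root_add unity_root_mult_period)

lemma unity_root_cong: "0 < q \<Longrightarrow> [a = b] (mod int q) \<Longrightarrow> unity_root q a = unity_root q b"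
  by (metis cong_def unity_root_mod)

lemma unity_root_eq_1_iff: "0 < q \<Longrightarrow> unity_root q a = 1 \<longleftrightarrow> int q dvd a"
proof -
  assume q: "0 < q"
  define r where "r = nat (a mod int q)"
  have r: "int r = a mod int q" using q by (simp add: r_def)
  have "unity_root q a = unity_root q (int r)" using unity_root_mod[OF q, of a] r by simp
  also have "\<dots> = exp (2 * of_real pi * \<i> * of_nat r / of_nat q)" unfolding unity_root_def by simp
  finally have "unity_root q a = exp (2 * of_real pi * \<i> * of_nat r / of_nat q)" .
  then have "unity_root q a = 1 \<longleftrightarrow> q dvd r" using complex_root_unity_eq_1[of q r] q by simp
  also have "\<dots> \<longleftrightarrow> int q dvd a mod int q" using r by (metis int_dvd_int_iff)
  also have "\<dots> \<longleftrightarrow> int q dvd a" by (simp add: dvd_mod_iff)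
  finally show ?thesis .
qed

lemma cnj_unity_root: "cnj (unity_root q a) = unity_root q (- a)"
  unfolding unity_root_def by (subst exp_cnj) simp

lemma unity_root_diff_uminus:
  "unity_root q a - unity_root q (- a) = 2 * \<i> * sin (2 * pi * a / q)"
proof -
  have "unity_root q a = cis (2 * pi * a / q)" "unity_root q (- a) = cis (- (2 * pi * a / q))"
    unfolding unity_root_def cis_conv_exp by (simp_all add: algebra_simps)
  then show ?thesis by (simp add: cis.ctr complex_eq_iff)
qed

lemma sum_unity_root_eq_0:
  assumes q: "0 < q" and a: "\<not> int q dvd a"
  shows "(\<Sum>m<q. unity_root q (a * int m)) = 0"
proof -
  let ?z = "unity_root q a"
  have "?z \<noteq> 1" using unity_root_eq_1_iff[OF q] a by simp
  moreover have "?z ^ q = 1"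
    unfolding unity_root_power using unity_root_mult_period[OF q, of a] by (simp add: mult.commute)
  ultimately show ?thesis using geometric_sum[of ?z q] by (simp add: unity_root_power)
qed

lemma odd_not_dvd_double:
  assumes "odd q" "0 < d" "d < q"
  shows "\<not> int q dvd 2 * int d"
proof
  assume "int q dvd 2 * int d"
  then have "q dvd 2 * d" by (metis int_dvd_int_iff of_nat_mult of_nat_numeral)
  then have "q dvd d" using assms(1) by (metis coprime_dvd_mult_right_iff coprime_right_2_iff_odd mult.commute)
  then show False using assms(2,3) dvd_imp_le by fastforce
qed

lemma sum_lessThan_reindex_mod:
  fixes g :: "nat \<Rightarrow> 'b::comm_monoid_add"
  assumes q: "0 < q" and inj: "\<And>a b. a < q \<Longrightarrow> b < q \<Longrightarrow> f a mod q = f b mod q \<Longrightarrow> a = b"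
  shows "(\<Sum>k<q. g (f k mod q)) = (\<Sum>k<q. g k)"
proof -
  let ?h = "\<lambda>k. f k mod q"
  have io: "inj_on ?h {..<q}" unfolding inj_on_def lessThan_iff using inj by blast
  have "?h ` {..<q} \<subseteq> {..<q}" using q by auto
  then have "?h ` {..<q} = {..<q}" using endo_inj_surj[OF _ _ io] by simp
  then show ?thesis using sum.reindex[OF io, of g] by (simp add: comp_def)
qed

lemma sum_lessThan_shift_mod:
  fixes g :: "nat \<Rightarrow> 'b::comm_monoid_add"
  assumes q: "0 < q" and per: "\<And>n. g n = g (n mod q)"
  shows "(\<Sum>k<q. g (k + c)) = (\<Sum>k<q. g k)"
proof -
  have "(\<Sum>k<q. g (k + c)) = (\<Sum>k<q. g ((k + c) mod q))" by (intro sum.cong refl) (rule per)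
  also have "\<dots> = (\<Sum>k<q. g k)"
    by (rule sum_lessThan_reindex_mod[OF q]) (metis cong_def cong_add_rcancel_nat mod_less)
  finally show ?thesis .
qed

section \<open>Gaussian binomial coefficients\<close>

fun qbinomial :: "'a::comm_ring_1 \<Rightarrow> nat \<Rightarrow> nat \<Rightarrow> 'a" where
  "qbinomial x m 0 = 1"
| "qbinomial x 0 (Suc k) = 0"
| "qbinomial x (Suc m) (Suc k) = qbinomial x m k + x ^ Suc k * qbinomial x m (Suc k)"

lemma qbinomial_eq_0: "m < k \<Longrightarrow> qbinomial x m k = 0"
proof (induction m arbitrary: k)
  case 0 then show ?case by (cases k) auto
next
  case (Suc m) then show ?case by (cases k) auto
qed

lemma qbinomial_diag: "qbinomial x m m = 1"
  by (induction m) (auto simp: qbinomial_eq_0)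

lemma qbinomial_Suc_Suc':
  "qbinomial x (Suc n) (Suc k) = x ^ (n - k) * qbinomial x n k + qbinomial x n (Suc k)"
proof (induction n arbitrary: k)
  case 0 then show ?case by (cases k) auto
next
  case (Suc n)
  show ?case
  proof (cases k)
    case 0
    then show ?thesis using Suc.IH[of 0] by (simp add: algebra_simps)
  next
    case (Suc k')
    show ?thesis
    proof (cases "k' < n")
      case True
      then obtain d where d: "n = k' + Suc d" by (metis add_Suc_right less_imp_Suc_add)
      define A where "A = qbinomial x n k'"
      define B where "B = qbinomial x n (Suc k')"
      define C where "C = qbinomial x n (Suc (Suc k'))"
      have r1: "qbinomial x (Suc n) (Suc k') = A + x ^ Suc k' * B"
        and r2: "qbinomial x (Suc n) (Suc (Suc k')) = B + x ^ Suc (Suc k') * C"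
        by (simp_all add: A_def B_def C_def)
      have i1: "qbinomial x (Suc n) (Suc k') = x ^ Suc d * A + B"
        and i2: "qbinomial x (Suc n) (Suc (Suc k')) = x ^ d * B + C"
        using Suc.IH[of k'] Suc.IH[of "Suc k'"] d by (simp_all add: A_def B_def C_def)
      have e: "Suc n - Suc k' = Suc d" using d by simp
      have "qbinomial x (Suc (Suc n)) (Suc (Suc k'))
          = (x ^ Suc d * A + B) + x ^ Suc (Suc k') * (x ^ d * B + C)"
        by (subst qbinomial.simps(3)) (simp only: i1 i2)
      also have "\<dots> = x ^ Suc d * (A + x ^ Suc k' * B) + (B + x ^ Suc (Suc k') * C)"
        by (simp add: algebra_simps power_add)
      also have "\<dots> = x ^ (Suc n - Suc k') * qbinomial x (Suc n) (Suc k')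
                      + qbinomial x (Suc n) (Suc (Suc k'))"
        by (simp only: r1 r2 e)
      finally show ?thesis unfolding Suc .
    next
      case False
      then show ?thesis unfolding Suc using Suc.IH[of k']
        by (cases "n = k'") (auto simp: qbinomial_eq_0)
    qed
  qed
qed

definition qbinomial_alt_sum :: "'a::comm_ring_1 \<Rightarrow> nat \<Rightarrow> 'a" where
  "qbinomial_alt_sum x n = (\<Sum>k<Suc n. (-1) ^ k * qbinomial x n k)"

definition qbinomial_twisted_alt_sum :: "'a::comm_ring_1 \<Rightarrow> nat \<Rightarrow> 'a" where
  "qbinomial_twisted_alt_sum x n = (\<Sum>k<Suc n. (-1) ^ k * x ^ k * qbinomial x n k)"

lemma qbinomial_twisted_alt_sum_shift:
  "qbinomial_twisted_alt_sum x n = 1 - (\<Sum>k<Suc n. (-1) ^ k * x ^ Suc k * qbinomial x n (Suc k))"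
proof -
  have "qbinomial_twisted_alt_sum x n
      = 1 + (\<Sum>k<n. (-1) ^ Suc k * x ^ Suc k * qbinomial x n (Suc k))"
    unfolding qbinomial_twisted_alt_sum_def by (subst sum.lessThan_Suc_shift) simp
  also have "(\<Sum>k<n. (-1) ^ Suc k * x ^ Suc k * qbinomial x n (Suc k))
      = (\<Sum>k<Suc n. (-1) ^ Suc k * x ^ Suc k * qbinomial x n (Suc k))"
    by (simp add: qbinomial_eq_0)
  finally show ?thesis by (simp add: sum_negf[symmetric])
qed

lemma qbinomial_alt_sum_Suc:
  "qbinomial_alt_sum x (Suc n) = qbinomial_twisted_alt_sum x n - qbinomial_alt_sum x n"
proof -
  have "qbinomial_alt_sum x (Suc n)
      = 1 + (\<Sum>k<Suc n. (-1) ^ Suc k * qbinomial x (Suc n) (Suc k))"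
    unfolding qbinomial_alt_sum_def by (subst sum.lessThan_Suc_shift) simp
  also have "(\<Sum>k<Suc n. (-1) ^ Suc k * qbinomial x (Suc n) (Suc k)) =
     (\<Sum>k<Suc n. - ((-1) ^ k * qbinomial x n k) - (-1) ^ k * x ^ Suc k * qbinomial x n (Suc k))"
    by (intro sum.cong) (auto simp: algebra_simps)
  also have "\<dots> = - qbinomial_alt_sum x n
                  - (\<Sum>k<Suc n. (-1) ^ k * x ^ Suc k * qbinomial x n (Suc k))"
    unfolding qbinomial_alt_sum_def by (simp add: sum_subtractf sum_negf)
  finally show ?thesis using qbinomial_twisted_alt_sum_shift[of x n] by simp
qed

lemma qbinomial_twisted_alt_sum_Suc:
  "qbinomial_twisted_alt_sum x (Suc n)
     = qbinomial_twisted_alt_sum x n - x ^ Suc n * qbinomial_alt_sum x n"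
proof -
  have "qbinomial_twisted_alt_sum x (Suc n)
      = 1 + (\<Sum>k<Suc n. (-1) ^ Suc k * x ^ Suc k * qbinomial x (Suc n) (Suc k))"
    unfolding qbinomial_twisted_alt_sum_def by (subst sum.lessThan_Suc_shift) simp
  also have "(\<Sum>k<Suc n. (-1) ^ Suc k * x ^ Suc k * qbinomial x (Suc n) (Suc k)) =
     (\<Sum>k<Suc n. - (x ^ Suc n * ((-1) ^ k * qbinomial x n k))
                  - (-1) ^ k * x ^ Suc k * qbinomial x n (Suc k))"
  proof (intro sum.cong refl)
    fix k assume "k \<in> {..<Suc n}"
    then have "Suc k + (n - k) = Suc n" by simp
    then have e: "x ^ Suc k * x ^ (n - k) = x ^ Suc n" by (metis power_add)
    have "(-1) ^ Suc k * x ^ Suc k * qbinomial x (Suc n) (Suc k) =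
       - ((x ^ Suc k * x ^ (n - k)) * ((-1) ^ k * qbinomial x n k))
       - (-1) ^ k * x ^ Suc k * qbinomial x n (Suc k)"
      unfolding qbinomial_Suc_Suc' by (simp add: algebra_simps)
    then show "(-1) ^ Suc k * x ^ Suc k * qbinomial x (Suc n) (Suc k) =
       - (x ^ Suc n * ((-1) ^ k * qbinomial x n k)) - (-1) ^ k * x ^ Suc k * qbinomial x n (Suc k)"
      unfolding e .
  qed
  also have "\<dots> = - (x ^ Suc n * qbinomial_alt_sum x n)
                  - (\<Sum>k<Suc n. (-1) ^ k * x ^ Suc k * qbinomial x n (Suc k))"
    unfolding qbinomial_alt_sum_def sum_subtractf sum_negf sum_distrib_left by simp
  finally show ?thesis using qbinomial_twisted_alt_sum_shift[of x n] by simp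
qed

lemma qbinomial_alt_sum_Suc_Suc:
  "qbinomial_alt_sum x (Suc (Suc n)) = (1 - x ^ Suc n) * qbinomial_alt_sum x n"
  using qbinomial_alt_sum_Suc[of x "Suc n"] qbinomial_twisted_alt_sum_Suc[of x n]
    qbinomial_alt_sum_Suc[of x n]
  by (simp add: algebra_simps)

lemma qbinomial_alt_sum_even: "qbinomial_alt_sum x (2 * n) = (\<Prod>j<n. 1 - x ^ (2 * j + 1))"
proof (induction n)
  case 0 then show ?case by (simp add: qbinomial_alt_sum_def)
next
  case (Suc n)
  have "qbinomial_alt_sum x (2 * Suc n) = qbinomial_alt_sum x (Suc (Suc (2 * n)))" by simp
  then show ?case using Suc qbinomial_alt_sum_Suc_Suc[of x "2 * n"] by (simp add: mult.commute)
qed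

definition qpochhammer :: "'a::comm_ring_1 \<Rightarrow> nat \<Rightarrow> 'a" where
  "qpochhammer x n = (\<Prod>j<n. 1 - x ^ Suc j)"

lemma qpochhammer_Suc: "qpochhammer x (Suc n) = qpochhammer x n * (1 - x ^ Suc n)"
  by (simp add: qpochhammer_def)

lemma qbinomial_mult_qpochhammer:
  "k \<le> m \<Longrightarrow> qbinomial x m k * qpochhammer x k * qpochhammer x (m - k) = qpochhammer x m"
proof (induction m arbitrary: k)
  case 0 then show ?case by (simp add: qpochhammer_def)
next
  case (Suc m)
  show ?case
  proof (cases k)
    case 0 then show ?thesis by (simp add: qpochhammer_def)
  next
    case (Suc k')
    then have k': "k' \<le> m" using Suc.prems by simp
    show ?thesis
    proof (cases "k' = m")
      case True
      then show ?thesis using Suc by (simp add: qbinomial_eq_0 qbinomial_diag qpochhammer_def)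
    next
      case False
      then have k2: "Suc k' \<le> m" using k' by simp
      have "m - k' = Suc (m - Suc k')" using k2 by simp
      then have P: "qpochhammer x (m - k') = qpochhammer x (m - Suc k') * (1 - x ^ (m - k'))"
        by (simp add: qpochhammer_def)
      have "Suc k' + (m - k') = Suc m" using k2 by simp
      then have e: "x ^ Suc k' * x ^ (m - k') = x ^ Suc m" by (metis power_add)
      have "qbinomial x (Suc m) (Suc k') * qpochhammer x (Suc k') * qpochhammer x (Suc m - Suc k')
         = qbinomial x m k' * qpochhammer x k' * qpochhammer x (m - k') * (1 - x ^ Suc k')
           + x ^ Suc k' * (qbinomial x m (Suc k') * qpochhammer x (Suc k')
               * qpochhammer x (m - Suc k')) * (1 - x ^ (m - k'))"
        by (simp add: qpochhammer_Suc P algebra_simps)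
      also have "\<dots> = qpochhammer x m * (1 - x ^ Suc k')
                      + x ^ Suc k' * qpochhammer x m * (1 - x ^ (m - k'))"
        using Suc.IH k' k2 by simp
      also have "\<dots> = qpochhammer x m * (1 - x ^ Suc k' * x ^ (m - k'))"
        by (simp add: algebra_simps)
      also have "\<dots> = qpochhammer x (Suc m)"
        unfolding e qpochhammer_Suc ..
      finally show ?thesis using Suc by simp
    qed
  qed
qed

lemma unity_root_minus_2_power_ne_1:
  assumes "odd q" "0 < j" "j < q"
  shows "unity_root q (-2) ^ j \<noteq> 1"
proof -
  have "unity_root q (-2) ^ j = unity_root q (- (2 * int j))" by (simp add: unity_root_power)
  moreover have "\<not> int q dvd - (2 * int j)" using odd_not_dvd_double[OF assms] by simp
  ultimately show ?thesis using unity_root_eq_1_iff[of q] assms by simp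
qed

lemma qpochhammer_unity_root_ne_0:
  assumes "odd q" "m < q"
  shows "qpochhammer (unity_root q (-2)) m \<noteq> 0"
  using unity_root_minus_2_power_ne_1[OF assms(1)] assms(2)
  unfolding qpochhammer_def by (auto simp del: power_Suc)

lemma qpochhammer_split:
  "k \<le> n \<Longrightarrow> qpochhammer x n = qpochhammer x (n - k) * (\<Prod>j<k. 1 - x ^ (n - j))"
proof (induction k)
  case 0 then show ?case by simp
next
  case (Suc k)
  have "n - k = Suc (n - Suc k)" using Suc.prems by simp
  then have "qpochhammer x (n - k) = qpochhammer x (n - Suc k) * (1 - x ^ (n - k))"
    by (metis qpochhammer_Suc)
  then show ?case using Suc by (simp add: mult_ac)
qed

text \<open>With \<open>\<zeta> = unity_root q 1\<close> and \<open>x = \<zeta>^-2\<close>, the top factor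
  \<open>1 - x^(q-1-j) = 1 - \<zeta>^(2(j+1))\<close> equals \<open>-\<zeta>^(2(j+1)) (1 - x^(j+1))\<close>.\<close>

lemma prod_top_factors_unity_root:
  assumes q: "0 < q" and k: "k \<le> q - 1"
  shows "(\<Prod>j<k. 1 - unity_root q (-2) ^ (q - 1 - j))
       = (-1) ^ k * unity_root q (int (k * (k + 1))) * qpochhammer (unity_root q (-2)) k"
  using k
proof (induction k)
  case 0 then show ?case by (simp add: qpochhammer_def)
next
  case (Suc k)
  let ?z = "unity_root q (2 * int (Suc k))"
  have "[-2 * int (q - 1 - k) = 2 * int (Suc k)] (mod int q)"
  proof -
    have "-2 * int (q - 1 - k) = 2 * int (Suc k) + int q * (-2)"
      using Suc.prems by (simp add: of_nat_diff algebra_simps)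
    then show ?thesis by (metis cong_add_lcancel_0 cong_mult_self_left)
  qed
  then have top: "unity_root q (-2) ^ (q - 1 - k) = ?z"
    unfolding unity_root_power using unity_root_cong[OF q] by simp
  have bottom: "unity_root q (-2) ^ Suc k * ?z = 1"
    unfolding unity_root_power using unity_root_uminus_mult[of q "2 * int (Suc k)"] by simp
  have sq: "unity_root q (int (Suc k * (Suc k + 1))) = unity_root q (int (k * (k + 1))) * ?z"
    by (simp add: unity_root_add[symmetric] algebra_simps)
  have flip: "1 - ?z = - ?z * (1 - unity_root q (-2) ^ Suc k)"
    using bottom by (simp add: algebra_simps)
  have "(\<Prod>j<Suc k. 1 - unity_root q (-2) ^ (q - 1 - j))
      = (-1) ^ k * unity_root q (int (k * (k + 1))) * qpochhammer (unity_root q (-2)) k * (1 - ?z)"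
    using Suc top by simp
  also have "\<dots> = (-1) ^ Suc k * (unity_root q (int (k * (k + 1))) * ?z)
                  * (qpochhammer (unity_root q (-2)) k * (1 - unity_root q (-2) ^ Suc k))"
    unfolding flip by (simp add: mult_ac)
  finally show ?case by (simp only: sq qpochhammer_Suc)
qed

lemma qbinomial_unity_root:
  assumes q: "odd q" and k: "k \<le> q - 1"
  shows "qbinomial (unity_root q (-2)) (q - 1) k = (-1) ^ k * unity_root q (int (k * (k + 1)))"
proof -
  let ?x = "unity_root q (-2)" and ?c = "(-1) ^ k * unity_root q (int (k * (k + 1)))"
  have q0: "0 < q" using q by (cases q) auto
  have "qbinomial ?x (q - 1) k * (qpochhammer ?x k * qpochhammer ?x (q - 1 - k))
      = ?c * (qpochhammer ?x k * qpochhammer ?x (q - 1 - k))"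
    using qbinomial_mult_qpochhammer[OF k, of ?x] qpochhammer_split[OF k, of ?x]
      prod_top_factors_unity_root[OF q0 k]
    by (simp add: algebra_simps)
  moreover have "qpochhammer ?x k * qpochhammer ?x (q - 1 - k) \<noteq> 0"
    using qpochhammer_unity_root_ne_0[OF q] k q0 by simp
  ultimately show ?thesis by simp
qed

section \<open>The quadratic Gauss sum\<close>

definition quad_gauss_sum :: "nat \<Rightarrow> complex" where
  "quad_gauss_sum q = (\<Sum>n<q. unity_root q (int (n * n)))"

lemma unity_root_square_mod:
  "0 < q \<Longrightarrow> unity_root q (int (n * n)) = unity_root q (int ((n mod q) * (n mod q)))"
  by (metis cong_int_iff cong_def mod_mult_eq unity_root_cong)

lemma quad_gauss_sum_shifted_square:
  assumes q: "q = 2 * h + 1"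
  shows "(\<Sum>k<q. unity_root q (int (k * (k + 1)))) * unity_root q (int (h * h)) = quad_gauss_sum q"
proof -
  have q0: "0 < q" using q by simp
  have "(\<Sum>k<q. unity_root q (int (k * (k + 1)))) * unity_root q (int (h * h))
      = (\<Sum>k<q. unity_root q (int ((k + (h + 1)) * (k + (h + 1)))))"
    unfolding sum_distrib_right
  proof (intro sum.cong refl)
    fix k
    have "int ((k + (h + 1)) * (k + (h + 1))) = int (k * (k + 1)) + int (h * h) + int q * int (k + 1)"
      using q by (simp add: algebra_simps)
    then show "unity_root q (int (k * (k + 1))) * unity_root q (int (h * h))
             = unity_root q (int ((k + (h + 1)) * (k + (h + 1))))"
      by (simp only: unity_root_add unity_root_mult_period[OF q0] mult_1_right)
  qed
  also have "\<dots> = quad_gauss_sum q"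
    unfolding quad_gauss_sum_def
    by (rule sum_lessThan_shift_mod[OF q0]) (rule unity_root_square_mod[OF q0])
  finally show ?thesis .
qed

lemma prod_one_minus_odd_powers_unity_root:
  "(\<Prod>j<h. 1 - unity_root q (-2) ^ (2 * j + 1)) * unity_root q (int (h * h))
     = (\<Prod>j<h. 2 * \<i> * complex_of_real (sin (2 * pi * real (2 * j + 1) / q)))"
proof (induction h)
  case 0 then show ?case by simp
next
  case (Suc h)
  let ?a = "int (2 * h + 1)"
  have "unity_root q (-2) ^ (2 * h + 1) * unity_root q ?a = unity_root q (- ?a)"
    unfolding unity_root_power unity_root_add[symmetric] by (simp add: algebra_simps)
  then have "(1 - unity_root q (-2) ^ (2 * h + 1)) * unity_root q ?a
           = unity_root q ?a - unity_root q (- ?a)"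
    by (simp add: algebra_simps)
  also have "\<dots> = 2 * \<i> * sin (2 * pi * real (2 * h + 1) / q)"
    using unity_root_diff_uminus[of q ?a] by simp
  finally have step: "(1 - unity_root q (-2) ^ (2 * h + 1)) * unity_root q ?a
                    = 2 * \<i> * sin (2 * pi * real (2 * h + 1) / q)" .
  have "unity_root q (int (Suc h * Suc h)) = unity_root q (int (h * h)) * unity_root q ?a"
    unfolding unity_root_add[symmetric] by (simp add: algebra_simps)
  then have "(\<Prod>j<Suc h. 1 - unity_root q (-2) ^ (2 * j + 1)) * unity_root q (int (Suc h * Suc h))
      = ((\<Prod>j<h. 1 - unity_root q (-2) ^ (2 * j + 1)) * unity_root q (int (h * h)))
        * ((1 - unity_root q (-2) ^ (2 * h + 1)) * unity_root q ?a)"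
    by (simp only: prod.lessThan_Suc) (simp add: mult_ac)
  then show ?case by (simp only: Suc.IH step prod.lessThan_Suc)
qed

lemma quad_gauss_sum_eq_sin_prod:
  assumes q: "q = 2 * h + 1"
  shows "quad_gauss_sum q
       = (2 * \<i>) ^ h * complex_of_real (\<Prod>j<h. sin (2 * pi * real (2 * j + 1) / q))"
proof -
  let ?x = "unity_root q (-2)"
  have "(\<Sum>k<q. unity_root q (int (k * (k + 1)))) = (\<Sum>k<q. (-1) ^ k * qbinomial ?x (q - 1) k)"
    using qbinomial_unity_root[of q] q by (intro sum.cong) (auto simp flip: power_mult_distrib)
  also have "\<dots> = (\<Prod>j<h. 1 - ?x ^ (2 * j + 1))"
    using qbinomial_alt_sum_even[of ?x h] q by (simp add: qbinomial_alt_sum_def)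
  finally have "quad_gauss_sum q = (\<Prod>j<h. 1 - ?x ^ (2 * j + 1)) * unity_root q (int (h * h))"
    using quad_gauss_sum_shifted_square[OF q] by simp
  also have "\<dots> = (\<Prod>j<h. 2 * \<i> * complex_of_real (sin (2 * pi * real (2 * j + 1) / q)))"
    by (rule prod_one_minus_odd_powers_unity_root)
  finally show ?thesis by (simp add: prod.distrib)
qed

lemma quad_gauss_sum_mult_cnj:
  assumes q: "odd q"
  shows "quad_gauss_sum q * cnj (quad_gauss_sum q) = of_nat q"
proof -
  have q0: "0 < q" using q by (cases q) auto
  have "quad_gauss_sum q * cnj (quad_gauss_sum q)
      = (\<Sum>b<q. \<Sum>a<q. unity_root q (int (a * a) - int (b * b)))"
    unfolding quad_gauss_sum_def cnj_sum cnj_unity_root sum_product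
    by (subst sum.swap) (simp only: unity_root_add[symmetric] diff_conv_add_uminus)
  also have "\<dots> = (\<Sum>b<q. \<Sum>d<q. unity_root q (int (d * d)) * unity_root q (2 * int b * int d))"
  proof (rule sum.cong[OF refl])
    fix b
    let ?g = "\<lambda>a. unity_root q (int (a * a) - int (b * b))"
    have "?g n = ?g (n mod q)" for n
      by (rule unity_root_cong[OF q0], rule cong_diff[OF _ cong_refl])
         (metis cong_int_iff cong_def mod_mult_eq of_nat_mult)
    then have "(\<Sum>a<q. ?g a) = (\<Sum>d<q. ?g (d + b))"
      using sum_lessThan_shift_mod[OF q0, of ?g b] by simp
    also have "\<dots> = (\<Sum>d<q. unity_root q (int (d * d)) * unity_root q (2 * int b * int d))"
      by (intro sum.cong refl) (simp add: unity_root_add[symmetric] algebra_simps)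
    finally show "(\<Sum>a<q. ?g a) = \<dots>" .
  qed
  also have "\<dots> = (\<Sum>d<q. unity_root q (int (d * d)) * (\<Sum>b<q. unity_root q (2 * int d * int b)))"
    by (subst sum.swap) (simp add: sum_distrib_left mult_ac)
  also have "\<dots> = (\<Sum>d<q. if d = 0 then of_nat q else 0)"
    using sum_unity_root_eq_0[OF q0] odd_not_dvd_double[OF q] by (intro sum.cong) auto
  also have "\<dots> = of_nat q" using q0 by simp
  finally show ?thesis .
qed

lemma norm_quad_gauss_sum: "odd q \<Longrightarrow> norm (quad_gauss_sum q) = sqrt q"
  using complex_norm_square[of "quad_gauss_sum q"] quad_gauss_sum_mult_cnj[of q]
  by (metis norm_ge_zero of_real_eq_iff of_real_of_nat_eq real_sqrt_unique)

lemma prod_sign_split: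
  fixes s :: "nat \<Rightarrow> real"
  assumes pos: "\<And>j. j < J \<Longrightarrow> 0 < s j" and neg: "\<And>j. J \<le> j \<Longrightarrow> j < J + d \<Longrightarrow> s j < 0"
  shows "\<exists>R>0. (\<Prod>j<J + d. s j) = (-1) ^ d * R"
  using neg
proof (induction d)
  case 0
  have "0 < (\<Prod>j<J. s j)" using pos by (intro prod_pos) auto
  then show ?case by auto
next
  case (Suc d)
  then obtain R where R: "R > 0" "(\<Prod>j<J + d. s j) = (-1) ^ d * R" by auto
  have "s (J + d) < 0" using Suc.prems by simp
  then have "R * - s (J + d) > 0" using R(1) by (simp add: mult_pos_neg)
  moreover have "(\<Prod>j<J + Suc d. s j) = (-1) ^ Suc d * (R * - s (J + d))" using R by simp
  ultimately show ?case by blast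
qed

lemma sin_prod_odd_multiples_sign:
  assumes "odd q"
  shows "\<exists>R>0. (\<Prod>j<q div 2. sin (2 * pi * real (2 * j + 1) / q)) = (-1) ^ (q div 4) * R"
proof -
  let ?J = "q div 2 - q div 4"
  have "q mod 4 = 1 \<or> q mod 4 = 3" using assms by presburger
  then have q: "q = 4 * (q div 4) + 1 \<and> q div 2 = 2 * (q div 4)
              \<or> q = 4 * (q div 4) + 3 \<and> q div 2 = 2 * (q div 4) + 1"
    by (elim disjE; presburger)
  have "\<exists>R>0. (\<Prod>j<?J + q div 4. sin (2 * pi * real (2 * j + 1) / q)) = (-1) ^ (q div 4) * R"
  proof (rule prod_sign_split)
    fix j assume "j < ?J"
    then have "2 * (2 * j + 1) < q" using q by auto
    then show "0 < sin (2 * pi * real (2 * j + 1) / q)"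
      by (intro sin_gt_zero) (simp_all add: divide_less_eq)
  next
    fix j assume "?J \<le> j" "j < ?J + q div 4"
    then have "q < 2 * (2 * j + 1)" "2 * j + 1 < q" using q by auto
    then show "sin (2 * pi * real (2 * j + 1) / q) < 0"
      by (intro sin_lt_zero) (simp_all add: divide_less_eq less_divide_eq)
  qed
  moreover have "?J + q div 4 = q div 2" by simp
  ultimately show ?thesis by simp
qed

lemma two_i_power_half_sign:
  assumes "odd q"
  shows "(2 * \<i>) ^ (q div 2) * (-1) ^ (q div 4) = 2 ^ (q div 2) * (if q mod 4 = 1 then 1 else \<i>)"
proof -
  let ?m = "q div 4"
  have sq: "(2 * \<i>) ^ (2 * ?m) * (-1) ^ ?m = (4::complex) ^ ?m"
    by (simp add: power_mult power2_eq_square power_mult_distrib[symmetric])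
  have "q mod 4 = 1 \<or> q mod 4 = 3" using assms by presburger
  then show ?thesis
  proof
    assume "q mod 4 = 1"
    then have "q div 2 = 2 * ?m" by presburger
    then show ?thesis using sq \<open>q mod 4 = 1\<close> by (simp add: power_mult)
  next
    assume "q mod 4 = 3"
    then have "q div 2 = Suc (2 * ?m)" by presburger
    then show ?thesis using sq \<open>q mod 4 = 3\<close> by (simp add: power_mult mult_ac)
  qed
qed

lemma quad_gauss_sum_eq_c_q:
  assumes "odd q"
  shows "quad_gauss_sum q = c_q q"
proof -
  let ?h = "q div 2" and ?c = "if q mod 4 = 1 then 1 else \<i>"
  obtain R where R: "R > 0"
    "(\<Prod>j<?h. sin (2 * pi * real (2 * j + 1) / q)) = (-1) ^ (q div 4) * R"
    using sin_prod_odd_multiples_sign[OF assms] by blast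
  have "q = 2 * ?h + 1" using assms by presburger
  from quad_gauss_sum_eq_sin_prod[OF this]
  have "quad_gauss_sum q = ((2 * \<i>) ^ ?h * (-1) ^ (q div 4)) * complex_of_real R"
    unfolding R(2) by (simp add: mult_ac)
  also have "\<dots> = ?c * complex_of_real (2 ^ ?h * R)"
    using two_i_power_half_sign[OF assms] by simp
  finally have G: "quad_gauss_sum q = ?c * complex_of_real (2 ^ ?h * R)" .
  then have "2 ^ ?h * R = sqrt q"
    using norm_quad_gauss_sum[OF assms] R(1) by (simp add: norm_mult norm_power)
  then show ?thesis using G by (simp add: c_q_def)
qed

section \<open>The Legendre symbol and its Gauss sum\<close>

lemma Legendre_cong: "[a = b] (mod m) \<Longrightarrow> Legendre a m = Legendre b m"
proof -
  assume "[a = b] (mod m)"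
  then have "[a = 0] (mod m) \<longleftrightarrow> [b = 0] (mod m)" "QuadRes m a \<longleftrightarrow> QuadRes m b"
    unfolding QuadRes_def by (meson cong_sym cong_trans)+
  then show ?thesis unfolding Legendre_def by simp
qed

lemma Legendre_cases: "Legendre a m = 0 \<or> Legendre a m = 1 \<or> Legendre a m = -1"
  by (simp add: Legendre_def)

lemma Legendre_eq_0_iff: "Legendre a m = 0 \<longleftrightarrow> m dvd a"
  by (simp add: Legendre_def cong_0_iff)

lemma Legendre_one: "1 < m \<Longrightarrow> Legendre 1 m = 1"
proof -
  assume "1 < m"
  then have "\<not> [1 = 0] (mod m)" by (simp add: cong_0_iff zdvd_not_zless)
  moreover have "QuadRes m 1" unfolding QuadRes_def by (rule exI[of _ 1]) simp
  ultimately show ?thesis by (simp add: Legendre_def)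
qed

lemma Legendre_mult_self: "\<not> m dvd a \<Longrightarrow> Legendre a m * Legendre a m = 1"
  using Legendre_cases[of a m] Legendre_eq_0_iff[of a m] by auto

text \<open>Euler's criterion determines the product modulo \<open>p\<close>, and both sides lie in \<open>{-1, 0, 1}\<close>.\<close>

lemma Legendre_mult:
  fixes p :: nat
  assumes p: "prime p" "2 < p"
  shows "Legendre (a * b) p = Legendre a p * Legendre b p"
proof -
  have "[Legendre (a * b) p = (a * b) ^ ((p - 1) div 2)] (mod p)"
    using euler_criterion[OF p] by simp
  moreover have "[Legendre a p * Legendre b p = a ^ ((p - 1) div 2) * b ^ ((p - 1) div 2)] (mod p)"
    using euler_criterion[OF p, of a] euler_criterion[OF p, of b] by (simp add: cong_mult)
  ultimately have "[Legendre (a * b) p = Legendre a p * Legendre b p] (mod p)"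
    by (simp add: power_mult_distrib) (meson cong_sym cong_trans)
  then have "int p dvd Legendre (a * b) p - Legendre a p * Legendre b p"
    by (simp add: cong_iff_dvd_diff)
  moreover have "\<bar>Legendre (a * b) p - Legendre a p * Legendre b p\<bar> < int p"
    using Legendre_cases[of "a * b" p] Legendre_cases[of a p] Legendre_cases[of b p] p(2) by auto
  ultimately show ?thesis
    by (metis abs_of_nat dvd_imp_le_int eq_iff_diff_eq_0 not_le)
qed
lemma Legendre_mod_inverse:
  assumes q: "prime q" "2 < q" and u: "[p * u = 1] (mod q)"
  shows "Legendre (int u) (int q) = Legendre (int p) (int q)"
proof -
  have c: "[int p * int u = 1] (mod int q)" using u by (metis cong_int_iff of_nat_1 of_nat_mult)
  then have "Legendre (int p) (int q) * Legendre (int u) (int q) = 1"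
    using Legendre_mult[OF q] Legendre_cong[OF c] Legendre_one[of "int q"] q by simp
  then show ?thesis by (auto simp: zmult_eq_1_iff)
qed

lemma square_roots_mod_prime:
  fixes q x y :: nat
  assumes q: "prime q" and xy: "x < q" "y < q" and sq: "[y * y = x * x] (mod q)"
  shows "y = x \<or> x + y = q"
proof -
  have "[int y * int y = int x * int x] (mod int q)"
    using sq by (simp add: cong_int_iff flip: of_nat_mult)
  then have "int q dvd (int y - int x) * (int y + int x)"
    by (simp add: cong_iff_dvd_diff square_diff_square_factored mult.commute)
  then have "int q dvd int y - int x \<or> int q dvd int y + int x"
    using q by (simp add: prime_dvd_mult_iff)
  then show ?thesis
  proof
    assume "int q dvd int y - int x"
    then have "[y = x] (mod q)" by (simp add: cong_iff_dvd_diff flip: cong_int_iff)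
    then show ?thesis using xy by (simp add: cong_less_modulus_unique_nat)
  next
    assume "int q dvd int y + int x"
    then have "q dvd x + y" by (simp add: add.commute flip: of_nat_add)
    then obtain t where t: "x + y = q * t" by blast
    with xy have "q * t < q * 2" by linarith
    then have "t < 2" by simp
    then show ?thesis using t by (cases t) auto
  qed
qed
lemma square_roots_mod_prime_eq:
  fixes q x :: nat
  assumes q: "prime q" and x: "0 < x" "x < q"
  shows "{n. n < q \<and> (n * n) mod q = (x * x) mod q} = {x, q - x}"
proof -
  have "int (q - x) = int q - int x" using x(2) by simp
  then have "[int (q - x) * int (q - x) = int x * int x] (mod int q)"
    by (simp add: cong_iff_dvd_diff algebra_simps)
  then have "(q - x) * (q - x) mod q = x * x mod q"
    unfolding cong_def[symmetric] by (metis cong_int_iff of_nat_mult)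
  moreover have "n = x \<or> n = q - x" if "n < q" "(n * n) mod q = (x * x) mod q" for n
    using square_roots_mod_prime[OF q x(2) that(1)] that(2) by (auto simp: cong_def)
  ultimately show ?thesis using x by auto
qed

lemma card_square_roots_mod_prime:
  fixes q m :: nat
  assumes q: "prime q" "odd q" and m: "m < q"
  shows "card {n. n < q \<and> (n * n) mod q = m} = nat (1 + Legendre (int m) (int q))"
proof -
  have q0: "0 < q" using q by (simp add: prime_gt_0_nat)
  show ?thesis
  proof (cases "m = 0")
    case True
    have zero_root: "n = 0" if "n < q" "(n * n) mod q = 0" for n
      using square_roots_mod_prime[OF q(1) q0 that(1)] that by (simp add: cong_def)
    have "{n. n < q \<and> (n * n) mod q = m} = {0}"
      unfolding True using q0 by (auto dest: zero_root)
    then show ?thesis using True by (simp add: Legendre_def)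
  next
    case m0: False
    then have nz: "\<not> [int m = 0] (mod int q)" using m by (auto simp: cong_0_iff dest: dvd_imp_le)
    show ?thesis
    proof (cases "QuadRes (int q) (int m)")
      case False
      have "\<not> (n < q \<and> (n * n) mod q = m)" for n
      proof
        assume "n < q \<and> (n * n) mod q = m"
        then have "[int n ^ 2 = int m] (mod int q)"
          by (metis cong_def cong_int_iff mod_mod_trivial power2_eq_square of_nat_mult)
        then show False using False unfolding QuadRes_def by blast
      qed
      then show ?thesis using False nz by (simp add: Legendre_def)
    next
      case True
      then obtain y where "[y ^ 2 = int m] (mod int q)" unfolding QuadRes_def by blast
      moreover define x where "x = nat (y mod int q)"
      ultimately have x: "x < q" "(x * x) mod q = m"
        using m q0 by (auto simp: nat_less_iff power2_eq_square cong_def mod_mult_eq nat_mod_as_int)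
      then have "0 < x" using m0 by (cases x) auto
      then have "{n. n < q \<and> (n * n) mod q = m} = {x, q - x}"
        unfolding x(2)[symmetric] using x(1) q(1) by (rule square_roots_mod_prime_eq[rotated])
      moreover have "x \<noteq> q - x" using q(2) x(1) by presburger
      ultimately show ?thesis using True nz by (simp add: Legendre_def)
    qed
  qed
qed

lemma sum_square_residues_mod_prime:
  fixes F :: "nat \<Rightarrow> complex"
  assumes q: "prime q" "odd q"
  shows "(\<Sum>n<q. F (n * n mod q)) = (\<Sum>m<q. of_int (1 + Legendre (int m) (int q)) * F m)"
proof -
  have q0: "0 < q" using q by (simp add: prime_gt_0_nat)
  have "(\<Sum>n<q. F (n * n mod q)) = (\<Sum>n<q. \<Sum>m<q. if n * n mod q = m then F m else 0)"
    using q0 by (intro sum.cong) (auto simp: sum.delta)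
  also have "\<dots> = (\<Sum>m<q. \<Sum>n<q. if n * n mod q = m then F m else 0)"
    by (rule sum.swap)
  also have "\<dots> = (\<Sum>m<q. of_nat (card {n. n < q \<and> n * n mod q = m}) * F m)"
    by (intro sum.cong refl) (simp add: sum.If_cases Int_def)
  also have "\<dots> = (\<Sum>m<q. of_int (1 + Legendre (int m) (int q)) * F m)"
  proof (intro sum.cong refl)
    fix m assume "m \<in> {..<q}"
    moreover have "0 \<le> 1 + Legendre (int m) (int q)" using Legendre_cases[of "int m" "int q"] by auto
    ultimately show "of_nat (card {n. n < q \<and> n * n mod q = m}) * F m
                   = of_int (1 + Legendre (int m) (int q)) * F m"
      by (simp add: card_square_roots_mod_prime[OF q] of_nat_nat del: of_int_add)
  qed
  finally show ?thesis .
qed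

lemma sum_Legendre_eq_0:
  assumes "prime q" "odd q"
  shows "(\<Sum>m<q. (of_int (Legendre (int m) (int q)) :: complex)) = 0"
  using sum_square_residues_mod_prime[OF assms, of "\<lambda>_. 1"] by (simp add: sum.distrib)

lemma quad_gauss_sum_eq_Legendre_sum:
  assumes q: "prime q" "odd q"
  shows "quad_gauss_sum q = (\<Sum>m<q. of_int (Legendre (int m) (int q)) * unity_root q (int m))"
proof -
  have q1: "1 < q" using prime_gt_1_nat[OF q(1)] .
  have "quad_gauss_sum q = (\<Sum>n<q. unity_root q (int (n * n mod q)))"
    unfolding quad_gauss_sum_def using q1
    by (intro sum.cong refl) (simp add: of_nat_mod unity_root_mod)
  also have "\<dots> = (\<Sum>m<q. unity_root q (int m))
      + (\<Sum>m<q. of_int (Legendre (int m) (int q)) * unity_root q (int m))"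
    using sum_square_residues_mod_prime[OF q, of "\<lambda>m. unity_root q (int m)"]
    by (simp add: sum.distrib algebra_simps)
  also have "(\<Sum>m<q. unity_root q (int m)) = 0" using sum_unity_root_eq_0[of q 1] q1 by simp
  finally show ?thesis by simp
qed

text \<open>Substituting \<open>m \<mapsto> a m\<close> and using multiplicativity of the Legendre symbol.\<close>

lemma Legendre_gauss_sum:
  assumes q: "prime q" "odd q" and a: "\<not> q dvd a"
  shows "(\<Sum>m<q. of_int (Legendre (int m) (int q)) * unity_root q (int a * int m))
       = of_int (Legendre (int a) (int q)) * quad_gauss_sum q"
proof -
  have q0: "0 < q" using q by (simp add: prime_gt_0_nat)
  have q2: "2 < q" using prime_gt_1_nat[OF q(1)] q(2) by presburger
  have cop: "coprime a q" using a q(1) by (metis coprime_commute prime_imp_coprime)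
  let ?L = "\<lambda>x. of_int (Legendre x (int q)) :: complex"
  let ?g = "\<lambda>m. ?L (int m) * unity_root q (int m)"
  have "quad_gauss_sum q = (\<Sum>m<q. ?g ((a * m) mod q))"
    unfolding quad_gauss_sum_eq_Legendre_sum[OF q]
    by (rule sum_lessThan_reindex_mod[OF q0, symmetric])
       (metis cong_def cong_mult_lcancel_nat cop cong_less_modulus_unique_nat)
  also have "\<dots> = (\<Sum>m<q. ?L (int a) * (?L (int m) * unity_root q (int a * int m)))"
  proof (rule sum.cong[OF refl])
    fix m
    have c: "[int (a * m mod q) = int a * int m] (mod int q)"
      by (simp add: cong_def flip: of_nat_mult zmod_int)
    show "?g (a * m mod q) = ?L (int a) * (?L (int m) * unity_root q (int a * int m))"
      using Legendre_cong[OF c] Legendre_mult[OF q(1) q2] unity_root_cong[OF q0 c] by simp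
  qed
  finally have "quad_gauss_sum q
      = ?L (int a) * (\<Sum>m<q. ?L (int m) * unity_root q (int a * int m))"
    by (simp add: sum_distrib_left)
  moreover have "?L (int a) * ?L (int a) = 1"
    using Legendre_mult_self[of "int q" "int a"] a by (simp flip: of_int_mult)
  ultimately show ?thesis by (metis mult.assoc mult_1)
qed

section \<open>The Zak transform of the Golomb sequence\<close>

lemma cong_mult_inv_mod:
  assumes "coprime p q" "1 < q"
  shows "[p * inv_mod p q = 1] (mod q)"
proof -
  obtain x where x: "[p * x = 1] (mod q)" using cong_solve_coprime_nat[OF assms(1)] by auto
  have "[p * (x mod q) = p * x] (mod q)" by (simp add: cong_def mod_mult_right_eq)
  then have "x mod q < q \<and> [p * (x mod q) = 1] (mod q)" using cong_trans[OF _ x] assms(2) by simp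
  then have "\<exists>u. u < q \<and> [p * u = 1] (mod q)" by blast
  then show ?thesis unfolding inv_mod_def by (metis (mono_tags, lifting) someI_ex)
qed

lemma mod_jacobi_dvd_p:
  assumes p: "prime p" and q: "prime q" and pq: "p \<noteq> q" and n: "int p dvd n"
  shows "mod_jacobi p q n = (if int p * int q dvd n then 1 else 0)"
proof -
  let ?m = "n mod (int p * int q)"
  have pos: "0 < int p * int q" using p q by (simp add: prime_gt_0_nat)
  have "int p dvd ?m" using n by (simp add: dvd_mod)
  moreover have "?m \<noteq> 0 \<Longrightarrow> \<not> int q dvd ?m"
  proof
    assume "?m \<noteq> 0" "int q dvd ?m"
    moreover have "coprime (int p) (int q)" using p q pq by (simp add: primes_coprime)
    ultimately have "int p * int q dvd ?m" using \<open>int p dvd ?m\<close> by (simp add: divides_mult)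
    moreover have "0 < ?m" using \<open>?m \<noteq> 0\<close> pos_mod_sign[OF pos, of n] by linarith
    ultimately show False using zdvd_not_zless pos_mod_bound[OF pos] by blast
  qed
  ultimately show ?thesis unfolding mod_jacobi_def Let_def by (auto simp: dvd_eq_mod_eq_0)
qed

lemma mod_jacobi_not_dvd_p:
  assumes p: "prime p" and q: "prime q" and pq: "p \<noteq> q" and n: "\<not> int p dvd n"
  shows "mod_jacobi p q n = (1 + of_int (Legendre n (int p) * Legendre n (int q))) / 2
                          + (if int q dvd n then 1 / 2 else 0)"
proof -
  let ?m = "n mod (int p * int q)"
  have cp: "[?m = n] (mod int p)" and cq: "[?m = n] (mod int q)"
    by (simp_all add: cong_def mod_mod_cancel)
  have np: "\<not> int p dvd ?m" using n cp by (simp add: cong_dvd_iff)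
  then have "?m \<noteq> 0" by auto
  have Lp: "Legendre n (int p) = 1 \<or> Legendre n (int p) = -1"
    using Legendre_cases[of n "int p"] Legendre_eq_0_iff[of n "int p"] n by auto
  show ?thesis
  proof (cases "int q dvd n")
    case True
    then have "Legendre n (int q) = 0" by (simp add: Legendre_eq_0_iff)
    then show ?thesis
      using True \<open>?m \<noteq> 0\<close> np cq by (simp add: mod_jacobi_def Let_def cong_dvd_iff)
  next
    case False
    then have "Legendre n (int q) = 1 \<or> Legendre n (int q) = -1"
      using Legendre_cases[of n "int q"] Legendre_eq_0_iff[of n "int q"] by auto
    then show ?thesis
      using False \<open>?m \<noteq> 0\<close> np cq Lp Legendre_cong[OF cp] Legendre_cong[OF cq]
      by (auto simp: mod_jacobi_def Let_def jacobi_pq_def cong_dvd_iff)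
  qed
qed

lemma zak_unity_root:
  "zak p q y j k = (\<Sum>r<q. y (int k + int r * int p) * unity_root q (int (r * j)))"
  unfolding zak_def unity_root_def by simp

lemma zak_golomb:
  "zak p q (golomb p q) j k = (1 - golomb_alpha p q) * zak p q (mod_jacobi p q) j k
                              + golomb_alpha p q * zak p q (\<lambda>_. 1) j k"
  unfolding zak_def golomb_def sum_distrib_left sum.distrib[symmetric]
  by (intro sum.cong refl) (simp add: algebra_simps)

lemma zak_one:
  assumes "j < q"
  shows "zak p q (\<lambda>_. 1) j k = (if j = 0 then of_nat q else 0)"
proof (cases "j = 0")
  case False
  then have "\<not> int q dvd int j" using assms by (auto dest: dvd_imp_le)
  then show ?thesis
    using sum_unity_root_eq_0[of q "int j"] False assms by (simp add: zak_unity_root mult.commute)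
qed (simp add: zak_def)

lemma zak_mod_jacobi_0:
  assumes p: "prime p" and q: "prime q" and pq: "p \<noteq> q"
  shows "zak p q (mod_jacobi p q) j 0 = 1"
proof -
  have "mod_jacobi p q (int r * int p) = (if r = 0 then 1 else 0)" if "r < q" for r
  proof -
    have "int p * int q dvd int r * int p \<longleftrightarrow> q dvd r"
      using p by (simp add: mult.commute prime_gt_0_nat flip: of_nat_mult)
    then show ?thesis
      using mod_jacobi_dvd_p[OF p q pq, of "int r * int p"] that by (auto dest: dvd_imp_le)
  qed
  then have "zak p q (mod_jacobi p q) j 0 = (\<Sum>r<q. if r = 0 then 1 else 0)"
    unfolding zak_unity_root by (intro sum.cong) auto
  also have "\<dots> = 1" using q by (simp add: prime_gt_0_nat)
  finally show ?thesis .
qed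

text \<open>Since \<open>p\<close> is invertible modulo \<open>q\<close>, the samples \<open>k + r p\<close> (\<open>r < q\<close>) run through all residues
  \<open>m\<close> modulo \<open>q\<close>, with \<open>r \<equiv> u (m - k)\<close>.\<close>

lemma sum_arith_progression_reindex:
  fixes F :: "int \<Rightarrow> complex"
  assumes q0: "0 < q" and cop: "coprime p q" and u: "[p * u = 1] (mod q)"
    and per: "\<And>x. F x = F (x mod int q)"
  shows "(\<Sum>r<q. F (int k + int r * int p) * unity_root q (int (r * j)))
       = (\<Sum>m<q. F (int m) * unity_root q (int u * int j * (int m - int k)))"
proof -
  let ?g = "\<lambda>m. F (int m) * unity_root q (int u * int j * (int m - int k))"
  have "(\<Sum>m<q. ?g m) = (\<Sum>r<q. ?g ((k + r * p) mod q))"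
  proof (rule sum_lessThan_reindex_mod[OF q0, symmetric])
    fix x y assume "x < q" "y < q" "(k + x * p) mod q = (k + y * p) mod q"
    then have "[x * p = y * p] (mod q)" by (simp flip: cong_def add: cong_add_lcancel_nat)
    then show "x = y"
      using \<open>x < q\<close> \<open>y < q\<close> cong_mult_rcancel_nat[OF cop] cong_less_modulus_unique_nat by blast
  qed
  also have "\<dots> = (\<Sum>r<q. F (int k + int r * int p) * unity_root q (int (r * j)))"
  proof (rule sum.cong[OF refl])
    fix r
    have i: "int ((k + r * p) mod q) = (int k + int r * int p) mod int q"
      by (simp add: zmod_int)
    have diff: "[int ((k + r * p) mod q) - int k = int r * int p] (mod int q)"
      unfolding i cong_def by (simp add: mod_diff_left_eq)
    have "[int u * int j * (int ((k + r * p) mod q) - int k)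
              = (int p * int u) * (int r * int j)] (mod int q)"
      using cong_scalar_left[OF diff, of "int u * int j"] by (simp add: mult_ac)
    also have "[(int p * int u) * (int r * int j) = 1 * (int r * int j)] (mod int q)"
      using u by (intro cong_mult cong_refl) (metis cong_int_iff of_nat_1 of_nat_mult)
    finally show "?g ((k + r * p) mod q) = F (int k + int r * int p) * unity_root q (int (r * j))"
      using per[of "int k + int r * int p"] unity_root_cong[OF q0] by (simp add: i)
  qed
  finally show ?thesis by simp
qed

lemma sum_arith_progression_Legendre:
  assumes q0: "0 < q" and cop: "coprime p q" and u: "[p * u = 1] (mod q)"
  shows "(\<Sum>r<q. of_int (Legendre (int k + int r * int p) (int q)) * unity_root q (int (r * j)))
       = unity_root q (- int (u * k * j))
         * (\<Sum>m<q. of_int (Legendre (int m) (int q)) * unity_root q (int (u * j) * int m))"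
proof -
  let ?F = "\<lambda>x. of_int (Legendre x (int q)) :: complex"
  have per: "?F x = ?F (x mod int q)" for x by (metis Legendre_cong cong_mod_right cong_refl)
  show ?thesis unfolding sum_arith_progression_reindex[where F = ?F, OF q0 cop u per]
    by (simp add: sum_distrib_left unity_root_add[symmetric] algebra_simps)
qed

lemma sum_arith_progression_dvd:
  assumes q0: "0 < q" and cop: "coprime p q" and u: "[p * u = 1] (mod q)"
  shows "(\<Sum>r<q. (if int q dvd int k + int r * int p then 1 else 0) * unity_root q (int (r * j)))
       = unity_root q (- int (u * k * j))"
proof -
  let ?F = "\<lambda>x::int. if int q dvd x then 1 else 0 :: complex"
  have "?F x = ?F (x mod int q)" for x by (simp add: dvd_mod_iff)
  note reindex = sum_arith_progression_reindex[where F = ?F, OF q0 cop u this]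
  have "?F (int m) * unity_root q (int u * int j * (int m - int k))
      = (if m = 0 then unity_root q (- int (u * k * j)) else 0)" if "m < q" for m
    using that by (auto simp: algebra_simps dest: dvd_imp_le)
  then have "(\<Sum>m<q. ?F (int m) * unity_root q (int u * int j * (int m - int k)))
           = (\<Sum>m<q. if m = 0 then unity_root q (- int (u * k * j)) else 0)"
    by (intro sum.cong) auto
  also have "\<dots> = unity_root q (- int (u * k * j))"
    using q0 by (simp add: sum.delta cong: sum.cong)
  finally show ?thesis unfolding reindex .
qed

text \<open>For \<open>\<not> p dvd n\<close> the sequence is \<open>(1 + (n/p)(n/q))/2\<close> plus \<open>1/2\<close> at multiples of \<open>q\<close>;
  after reindexing, the Legendre part becomes a twisted Gauss sum and the correction a single
  root of unity.\<close>

lemma zak_mod_jacobi: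
  assumes p: "prime p" and q: "prime q" and pq: "p \<noteq> q" and k: "\<not> p dvd k"
    and u: "[p * u = 1] (mod q)"
  shows "zak p q (mod_jacobi p q) j k
     = zak p q (\<lambda>_. 1) j k / 2
       + of_int (Legendre (int k) (int p)) / 2 * unity_root q (- int (u * k * j))
           * (\<Sum>m<q. of_int (Legendre (int m) (int q)) * unity_root q (int (u * j) * int m))
       + unity_root q (- int (u * k * j)) / 2"
proof -
  have q0: "0 < q" using q by (simp add: prime_gt_0_nat)
  have cop: "coprime p q" using p q pq primes_coprime by blast
  let ?e = "\<lambda>r. unity_root q (int (r * j))" and ?n = "\<lambda>r. int k + int r * int p"
  let ?Lk = "of_int (Legendre (int k) (int p)) :: complex"
  have nd: "\<not> int p dvd ?n r" for r using k by (simp add: dvd_add_left_iff)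
  have Lp: "Legendre (?n r) (int p) = Legendre (int k) (int p)" for r
    by (rule Legendre_cong) (simp add: cong_def)
  have "zak p q (mod_jacobi p q) j k
     = (\<Sum>r<q. ?e r / 2 + ?Lk / 2 * (of_int (Legendre (?n r) (int q)) * ?e r)
          + (if int q dvd ?n r then 1 else 0) * ?e r / 2)"
    unfolding zak_unity_root mod_jacobi_not_dvd_p[OF p q pq nd] Lp
    by (intro sum.cong refl) (simp add: field_simps)
  also have "\<dots> = (\<Sum>r<q. ?e r) / 2
       + ?Lk / 2 * (\<Sum>r<q. of_int (Legendre (?n r) (int q)) * ?e r)
       + (\<Sum>r<q. (if int q dvd ?n r then 1 else 0) * ?e r) / 2"
    by (simp add: sum.distrib sum_distrib_left sum_divide_distrib)
  finally show ?thesis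
    unfolding sum_arith_progression_Legendre[OF q0 cop u] sum_arith_progression_dvd[OF q0 cop u]
      zak_unity_root[of _ _ "\<lambda>_. 1"]
    by (simp add: algebra_simps)
qed

lemma zak_mod_jacobi_freq_0:
  assumes p: "prime p" and q: "prime q" "odd q" and pq: "p \<noteq> q" and k: "\<not> p dvd k"
  shows "zak p q (mod_jacobi p q) 0 k = of_nat (q + 1) / 2"
proof -
  have "coprime p q" "1 < q" using p q pq primes_coprime prime_gt_1_nat by blast+
  then have "[p * inv_mod p q = 1] (mod q)" by (rule cong_mult_inv_mod)
  from zak_mod_jacobi[OF p q(1) pq k this, of 0]
  show ?thesis using sum_Legendre_eq_0[OF q] zak_one[of 0 q] \<open>1 < q\<close> by (simp add: field_simps)
qed

lemma zak_mod_jacobi_generic: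
  assumes p: "prime p" and q: "prime q" "odd q" and pq: "p \<noteq> q" and k: "\<not> p dvd k"
    and j: "0 < j" "j < q"
  shows "zak p q (mod_jacobi p q) j k
       = (1 + c_q q * of_int (Legendre (int p) (int q) * Legendre (int k) (int p)
                                * Legendre (int j) (int q))) / 2
         * exp (- 2 * pi * \<i> * of_nat (inv_mod p q * k * j) / of_nat q)"
proof -
  let ?u = "inv_mod p q"
  have q1: "1 < q" and q2: "2 < q" using prime_gt_1_nat[OF q(1)] q(2) by presburger+
  have "coprime p q" using p q pq primes_coprime by blast
  then have u: "[p * ?u = 1] (mod q)" using q1 by (rule cong_mult_inv_mod)
  have "\<not> q dvd ?u"
  proof
    assume "q dvd ?u"
    then have "q dvd 1" using cong_dvd_iff[OF u] by simp
    then show False using q1 by simp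
  qed
  moreover have "\<not> q dvd j" using j by (auto dest: dvd_imp_le)
  ultimately have "\<not> q dvd ?u * j" using q(1) by (simp add: prime_dvd_mult_iff)
  from Legendre_gauss_sum[OF q this]
  have G: "(\<Sum>m<q. of_int (Legendre (int m) (int q)) * unity_root q (int (?u * j) * int m))
         = of_int (Legendre (int p) (int q) * Legendre (int j) (int q)) * c_q q"
    using Legendre_mult[OF q(1) q2, of "int ?u" "int j"] Legendre_mod_inverse[OF q(1) q2 u]
      quad_gauss_sum_eq_c_q[OF q(2)] by simp
  have "exp (- 2 * pi * \<i> * of_nat (?u * k * j) / of_nat q) = unity_root q (- int (?u * k * j))"
    unfolding unity_root_def by (simp add: algebra_simps)
  then show ?thesis
    unfolding zak_mod_jacobi[OF p q(1) pq k u, of j] G zak_one[OF j(2)] using j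
    by (simp add: field_simps)
qed

theorem theorem11:
  fixes p q j k :: nat
  assumes "prime p" "odd p" "prime q" "q = p + 2"
    and "j < q" "k < p"
  shows "zak p q (golomb p q) j k =
    (let \<alpha> = golomb_alpha p q in
     if j = 0 \<and> k = 0 then 1 - \<alpha> + \<alpha> * of_nat q
     else if j = 0 then (1 - \<alpha>) * of_nat (q + 1) / 2 + \<alpha> * of_nat q
     else if k = 0 then 1 - \<alpha>
     else (1 - \<alpha>) / 2 *
          (1 + c_q q * of_int (Legendre (int p) (int q) * Legendre (int k) (int p)
                                * Legendre (int j) (int q)))
          * exp (- 2 * pi * \<i> * of_nat (inv_mod p q * k * j) / of_nat q))"
proof -
  note p = assms(1) and q = assms(3)
  have oq: "odd q" and pq: "p \<noteq> q" and q0: "0 < q" using assms(2,4,5) by simp_all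
  have k: "k \<noteq> 0 \<Longrightarrow> \<not> p dvd k" using assms(6) by (auto dest: dvd_imp_le)
  consider (k0) "k = 0" | (j0) "j = 0" "k \<noteq> 0" | (generic) "0 < j" "k \<noteq> 0" by blast
  then show ?thesis
  proof cases
    case k0
    then show ?thesis
      unfolding k0 zak_golomb zak_mod_jacobi_0[OF p q pq] zak_one[OF assms(5)] by (simp add: Let_def)
  next
    case j0
    then show ?thesis
      unfolding j0(1) zak_golomb zak_mod_jacobi_freq_0[OF p q oq pq k[OF j0(2)]] zak_one[OF q0]
      by (simp add: Let_def)
  next
    case generic
    then show ?thesis
      unfolding zak_golomb zak_mod_jacobi_generic[OF p q oq pq k[OF generic(2)] generic(1) assms(5)]
        zak_one[OF assms(5)]
      by (simp add: Let_def)
  qed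
qed

end
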